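(* Let $c_0>0$, let $\mu:[c_0,\infty)\to\mathbb{R}$ and $Q:[1,\infty)\to\mathbb{R}_{\ge 0}$ be twice differentiable, increasing and concave. For $B\ge c_0$ and $\omega\in[c_0,B]$ let $Z_B(\omega)=\mu(\omega)+Q(B/\omega)$, let $\Omega^*(B)=\arg\max_{\omega\in[c_0,B]} Z_B(\omega)$, and let $\underline{\omega}(B)=\min\Omega^*(B)$, $\overline{\omega}(B)=\max\Omega^*(B)$. (i) If $N\mapsto N\,Q'(N)$ is non-increasing on $[1,\infty)$, then both $\underline{\omega}(B)$ and $\overline{\omega}(B)$ are non-decreasing functions of $B\in[c_0,\infty)$. (ii) If in addition $N\mapsto N^2 Q'(N)$ is strictly decreasing on $[1,\infty)$, then for every $B\ge c_0$ the set $\Omega^*(B)$ is a singleton $\{\omega^\star(B)\}$, and $B\mapsto\omega^\star(B)$ is non-decreasing.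
   Context: Interpretation: $B$ is a total budget, $\omega$ a per-run budget, $\mu(\omega)$ the expected fitness of a single run with budget $\omega$, and $Q(N)$ the expected gain from taking the maximum over $N=B/\omega$ independent runs (continuous relaxation). $\Omega^*(B)$ is nonempty and compact since $Z_B$ is continuous on the compact interval $[c_0,B]$, so its minimum and maximum exist. *)

theory Defs
  imports "HOL-Analysis.Analysis"
begin

definition Zfun :: "(real \<Rightarrow> real) \<Rightarrow> (real \<Rightarrow> real) \<Rightarrow> real \<Rightarrow> real \<Rightarrow> real" where
  "Zfun \<mu> Q B \<omega> = \<mu> \<omega> + Q (B / \<omega>)"

definition Omega_star :: "(real \<Rightarrow> real) \<Rightarrow> (real \<Rightarrow> real) \<Rightarrow> real \<Rightarrow> real \<Rightarrow> real set" where
  "Omega_star \<mu> Q c0 B =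
     {\<omega> \<in> {c0..B}. \<forall>\<nu>\<in>{c0..B}. Zfun \<mu> Q B \<nu> \<le> Zfun \<mu> Q B \<omega>}"

text \<open>Smallest and largest maximiser (min / max of the compact set Omega*(B)).\<close>
definition omega_low :: "(real \<Rightarrow> real) \<Rightarrow> (real \<Rightarrow> real) \<Rightarrow> real \<Rightarrow> real \<Rightarrow> real" where
  "omega_low \<mu> Q c0 B = Inf (Omega_star \<mu> Q c0 B)"

definition omega_up :: "(real \<Rightarrow> real) \<Rightarrow> (real \<Rightarrow> real) \<Rightarrow> real \<Rightarrow> real \<Rightarrow> real" where
  "omega_up \<mu> Q c0 B = Sup (Omega_star \<mu> Q c0 B)"

end

theory Submission
  imports Defs
begin

text \<open>
  For \<open>B\<^sub>1 \<le> B\<^sub>2\<close> the gain \<open>Z\<^sub>B\<^sub>2(\<omega>) - Z\<^sub>B\<^sub>1(\<omega>) = Q(B\<^sub>2/\<omega>) - Q(B\<^sub>1/\<omega>)\<close> is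
  non-decreasing in \<open>\<omega>\<close>: its derivative is \<open>(N\<^sub>1 Q'(N\<^sub>1) - N\<^sub>2 Q'(N\<^sub>2))/\<omega>\<close> with
  \<open>N\<^sub>i = B\<^sub>i/\<omega>\<close>, which is non-negative because \<open>N Q'(N)\<close> is non-increasing.
  By this increasing-differences property, if \<open>\<omega>\<^sub>1\<close> is optimal for \<open>B\<^sub>1\<close>, \<open>\<omega>\<^sub>2\<close> is
  optimal for \<open>B\<^sub>2\<close> and \<open>\<omega>\<^sub>2 < \<omega>\<^sub>1\<close>, then the two may be exchanged: \<open>\<omega>\<^sub>2\<close> is optimal
  for \<open>B\<^sub>1\<close> and \<open>\<omega>\<^sub>1\<close> for \<open>B\<^sub>2\<close>. Hence the smallest and the largest maximiser move
  up with \<open>B\<close>.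
  The derivative of \<open>\<omega> \<mapsto> Q(B/\<omega>)\<close> is \<open>-N\<^sup>2 Q'(N)/B\<close> with \<open>N = B/\<omega>\<close>; if
  \<open>N\<^sup>2 Q'(N)\<close> is strictly decreasing, this map is strictly concave, so \<open>Z\<^sub>B\<close> is
  strictly concave and has a unique maximiser.
\<close>

definition maximisers :: "('a \<Rightarrow> 'b::linorder) \<Rightarrow> 'a set \<Rightarrow> 'a set" where
  "maximisers f S = {x \<in> S. \<forall>y\<in>S. f y \<le> f x}"

lemma maximisers_subset: "maximisers f S \<subseteq> S"
  by (auto simp: maximisers_def)

lemma maximisers_nonempty:
  fixes f :: "'a::topological_space \<Rightarrow> real"
  assumes "compact S" "S \<noteq> {}" "continuous_on S f"
  shows "maximisers f S \<noteq> {}"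
  using continuous_attains_sup[OF assms] by (auto simp: maximisers_def)

lemma maximisers_exchange:
  fixes f g :: "'a \<Rightarrow> 'b::linordered_ab_group_add"
  assumes x: "x \<in> maximisers f S" and y: "y \<in> maximisers g T"
    and "y \<in> S" "x \<in> T"
    and increasing_differences: "g y - f y \<le> g x - f x"
  shows "y \<in> maximisers f S \<and> x \<in> maximisers g T"
proof -
  have "f y \<le> f x" "g x \<le> g y"
    using assms by (auto simp: maximisers_def)
  with increasing_differences have "f x = f y" "g x = g y"
    by (metis add_le_cancel_left diff_add_cancel add.commute antisym add_mono)+
  with assms show ?thesis
    by (auto simp: maximisers_def)
qed

lemma maximisers_unique:
  fixes f :: "real \<Rightarrow> real"
  assumes "convex S"
    and strict_midpoint_concave:
      "\<And>x y. x \<in> S \<Longrightarrow> y \<in> S \<Longrightarrow> x < y \<Longrightarrow> (f x + f y) / 2 < f ((x + y) / 2)"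
    and "x \<in> maximisers f S" "y \<in> maximisers f S"
  shows "x = y"
proof -
  have two_maximisers_absurd: False if "u \<in> maximisers f S" "v \<in> maximisers f S" "u < v" for u v
  proof -
    define m where "m = (u + v) / 2"
    from that(1,2) have "u \<in> S" "v \<in> S"
      by (simp_all add: maximisers_def)
    then have "m \<in> S"
      using convexD[OF \<open>convex S\<close>, of u v "1/2" "1/2"] by (simp add: m_def add_divide_distrib)
    with that(1,2) have "f m \<le> f u" "f m \<le> f v"
      by (simp_all add: maximisers_def)
    moreover have "(f u + f v) / 2 < f m"
      unfolding m_def using strict_midpoint_concave \<open>u \<in> S\<close> \<open>v \<in> S\<close> \<open>u < v\<close> .
    ultimately show False
      by (simp add: field_simps)
  qed
  have "\<not> x < y" "\<not> y < x"
    using two_maximisers_absurd assms(3,4) by blast+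
  then show "x = y"
    by linarith
qed

lemma cInf_mono_of_exchange:
  fixes A B :: "'a::conditionally_complete_linorder set"
  assumes "A \<noteq> {}" "B \<noteq> {}" "bdd_below A"
    and exchange: "\<And>x y. x \<in> A \<Longrightarrow> y \<in> B \<Longrightarrow> y < x \<Longrightarrow> y \<in> A"
  shows "Inf A \<le> Inf B"
proof (rule cInf_greatest[OF \<open>B \<noteq> {}\<close>])
  fix y assume "y \<in> B"
  obtain x where "x \<in> A" using \<open>A \<noteq> {}\<close> by blast
  show "Inf A \<le> y"
  proof (cases "y < x")
    case True
    then show ?thesis using exchange \<open>x \<in> A\<close> \<open>y \<in> B\<close> cInf_lower \<open>bdd_below A\<close> by blast
  next
    case False
    then show ?thesis using cInf_lower[OF \<open>x \<in> A\<close> \<open>bdd_below A\<close>] by (simp add: not_less)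
  qed
qed

lemma cSup_mono_of_exchange:
  fixes A B :: "'a::conditionally_complete_linorder set"
  assumes "A \<noteq> {}" "B \<noteq> {}" "bdd_above B"
    and exchange: "\<And>x y. x \<in> A \<Longrightarrow> y \<in> B \<Longrightarrow> y < x \<Longrightarrow> x \<in> B"
  shows "Sup A \<le> Sup B"
proof (rule cSup_least[OF \<open>A \<noteq> {}\<close>])
  fix x assume "x \<in> A"
  obtain y where "y \<in> B" using \<open>B \<noteq> {}\<close> by blast
  show "x \<le> Sup B"
  proof (cases "y < x")
    case True
    then show ?thesis using exchange \<open>x \<in> A\<close> \<open>y \<in> B\<close> cSup_upper \<open>bdd_above B\<close> by blast
  next
    case False
    then show ?thesis using cSup_upper[OF \<open>y \<in> B\<close> \<open>bdd_above B\<close>] by (simp add: not_less)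
  qed
qed

lemma has_real_derivative_comp_quotient:
  fixes Q Q' :: "real \<Rightarrow> real"
  assumes Q_deriv: "\<And>x. x \<ge> 1 \<Longrightarrow> (Q has_real_derivative Q' x) (at x within {1..})"
    and "0 < w" "w < B"
  shows "((\<lambda>w. Q (B / w)) has_real_derivative - (B / w) * Q' (B / w) / w) (at w)"
proof -
  have "1 < B / w" using assms by simp
  then have "at (B / w) within {1..} = at (B / w)"
    by (intro at_within_interior) simp
  then have "(Q has_real_derivative Q' (B / w)) (at (B / w))"
    using Q_deriv \<open>1 < B / w\<close> by (metis less_imp_le)
  moreover have "((\<lambda>w. B / w) has_real_derivative - (B / w) / w) (at w)"
    using \<open>0 < w\<close> by (auto intro!: derivative_eq_intros simp: power2_eq_square)
  ultimately have "((\<lambda>w. Q (B / w)) has_real_derivative Q' (B / w) * (- (B / w) / w)) (at w)"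
    by (rule DERIV_chain2)
  then show ?thesis
    by (simp add: algebra_simps)
qed

lemma continuous_on_comp_quotient:
  fixes Q :: "real \<Rightarrow> real"
  assumes "continuous_on {1..} Q" "0 < a" "b \<le> B"
  shows "continuous_on {a..b} (\<lambda>w. Q (B / w))"
proof (rule continuous_on_compose2[OF assms(1)])
  show "continuous_on {a..b} (\<lambda>w. B / w)"
    using \<open>0 < a\<close> by (intro continuous_intros) auto
  show "(\<lambda>w. B / w) ` {a..b} \<subseteq> {1..}"
    using assms(2,3) by (auto simp: field_simps)
qed

lemma increasing_differences_comp_quotient:
  fixes Q Q' :: "real \<Rightarrow> real"
  assumes Q_deriv: "\<And>x. x \<ge> 1 \<Longrightarrow> (Q has_real_derivative Q' x) (at x within {1..})"
    and NQ'_nonincr: "\<And>x y. 1 \<le> x \<Longrightarrow> x \<le> y \<Longrightarrow> y * Q' y \<le> x * Q' x"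
    and "0 < v" "v \<le> w" "w \<le> B\<^sub>1" "B\<^sub>1 \<le> B\<^sub>2"
  shows "Q (B\<^sub>2 / v) - Q (B\<^sub>1 / v) \<le> Q (B\<^sub>2 / w) - Q (B\<^sub>1 / w)"
proof (rule DERIV_nonneg_imp_increasing_open[OF \<open>v \<le> w\<close>])
  fix x assume x: "v < x" "x < w"
  define N\<^sub>1 N\<^sub>2 where "N\<^sub>1 = B\<^sub>1 / x" and "N\<^sub>2 = B\<^sub>2 / x"
  have "0 < x" "x < B\<^sub>1" "x < B\<^sub>2" using x assms by auto
  have "1 \<le> N\<^sub>1" "N\<^sub>1 \<le> N\<^sub>2"
    using \<open>0 < x\<close> \<open>x < B\<^sub>1\<close> \<open>B\<^sub>1 \<le> B\<^sub>2\<close> by (auto simp: N\<^sub>1_def N\<^sub>2_def divide_right_mono)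
  then have "N\<^sub>2 * Q' N\<^sub>2 \<le> N\<^sub>1 * Q' N\<^sub>1"
    by (rule NQ'_nonincr)
  with \<open>0 < x\<close> have "0 \<le> (N\<^sub>1 * Q' N\<^sub>1 - N\<^sub>2 * Q' N\<^sub>2) / x"
    by simp
  moreover have "((\<lambda>w. Q (B\<^sub>2 / w) - Q (B\<^sub>1 / w)) has_real_derivative
      (N\<^sub>1 * Q' N\<^sub>1 - N\<^sub>2 * Q' N\<^sub>2) / x) (at x)"
    using DERIV_diff[OF has_real_derivative_comp_quotient[OF Q_deriv \<open>0 < x\<close> \<open>x < B\<^sub>2\<close>]
        has_real_derivative_comp_quotient[OF Q_deriv \<open>0 < x\<close> \<open>x < B\<^sub>1\<close>]]
    by (simp add: N\<^sub>1_def N\<^sub>2_def diff_divide_distrib)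
  ultimately show "\<exists>y. ((\<lambda>w. Q (B\<^sub>2 / w) - Q (B\<^sub>1 / w)) has_real_derivative y) (at x) \<and> 0 \<le> y"
    by blast
next
  have "continuous_on {1..} Q"
    using Q_deriv by (intro DERIV_continuous_on) auto
  with assms show "continuous_on {v..w} (\<lambda>w. Q (B\<^sub>2 / w) - Q (B\<^sub>1 / w))"
    by (intro continuous_on_diff continuous_on_comp_quotient) auto
qed

lemma mean_lt_midpoint_of_deriv_strict_decreasing:
  fixes q q' :: "real \<Rightarrow> real"
  assumes "a < b" "continuous_on {a..b} q"
    and deriv: "\<And>x. a < x \<Longrightarrow> x < b \<Longrightarrow> (q has_real_derivative q' x) (at x)"
    and decreasing: "\<And>x y. a < x \<Longrightarrow> x < y \<Longrightarrow> y < b \<Longrightarrow> q' y < q' x"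
  shows "(q a + q b) / 2 < q ((a + b) / 2)"
proof -
  define m where "m = (a + b) / 2"
  have "a < m" "m < b" "m - a = b - m" using \<open>a < b\<close> by (auto simp: m_def field_simps)
  have mean_value: "\<exists>z. u < z \<and> z < v \<and> q v - q u = q' z * (v - u)"
    if "a \<le> u" "u < v" "v \<le> b" for u v
  proof (rule mvt[of u v q "\<lambda>z. (*) (q' z)"])
    show "continuous_on {u..v} q"
      using \<open>continuous_on {a..b} q\<close> by (rule continuous_on_subset) (use that in auto)
    show "(q has_derivative (*) (q' z)) (at z)" if "u < z" "z < v" for z
      using deriv[of z] that \<open>a \<le> u\<close> \<open>v \<le> b\<close> by (simp add: has_field_derivative_def)
  qed (use that in auto)
  obtain x where x: "a < x" "x < m" "q m - q a = q' x * (m - a)"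
    using mean_value[of a m] \<open>a < m\<close> \<open>m < b\<close> by auto
  obtain y where y: "m < y" "y < b" "q b - q m = q' y * (b - m)"
    using mean_value[of m b] \<open>a < m\<close> \<open>m < b\<close> by auto
  have "q' y < q' x" using decreasing x y by (meson \<open>a < x\<close> less_trans)
  have "q b - q m = q' y * (m - a)" using y(3) \<open>m - a = b - m\<close> by simp
  also have "\<dots> < q' x * (m - a)" using \<open>q' y < q' x\<close> \<open>a < m\<close> by simp
  also have "\<dots> = q m - q a" using x(3) by simp
  finally show ?thesis unfolding m_def[symmetric] by (simp add: field_simps)
qed

lemma mean_lt_midpoint_comp_quotient:
  fixes Q Q' :: "real \<Rightarrow> real"
  assumes Q_deriv: "\<And>x. x \<ge> 1 \<Longrightarrow> (Q has_real_derivative Q' x) (at x within {1..})"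
    and N2Q'_decr: "\<And>x y. 1 \<le> x \<Longrightarrow> x < y \<Longrightarrow> y\<^sup>2 * Q' y < x\<^sup>2 * Q' x"
    and "0 < a" "a < b" "b \<le> B"
  shows "(Q (B / a) + Q (B / b)) / 2 < Q (B / ((a + b) / 2))"
proof (rule mean_lt_midpoint_of_deriv_strict_decreasing[where q = "\<lambda>w. Q (B / w)"])
  show "continuous_on {a..b} (\<lambda>w. Q (B / w))"
    using Q_deriv assms by (intro continuous_on_comp_quotient DERIV_continuous_on) auto
  show "((\<lambda>w. Q (B / w)) has_real_derivative - (B / x)\<^sup>2 * Q' (B / x) / B) (at x)"
    if "a < x" "x < b" for x
    using has_real_derivative_comp_quotient[OF Q_deriv, of x B] that assms
    by (simp add: power2_eq_square)
  show "- (B / y)\<^sup>2 * Q' (B / y) / B < - (B / x)\<^sup>2 * Q' (B / x) / B"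
    if "a < x" "x < y" "y < b" for x y
  proof -
    have "0 < x" "0 < B" using that assms by auto
    then have "1 \<le> B / y" "B / y < B / x"
      using that assms by (auto simp: field_simps)
    then show ?thesis using N2Q'_decr \<open>0 < B\<close> by (simp add: divide_strict_right_mono)
  qed
qed (use assms in auto)

lemma Omega_star_eq_maximisers: "Omega_star \<mu> Q c0 B = maximisers (Zfun \<mu> Q B) {c0..B}"
  by (simp add: Omega_star_def maximisers_def)

lemma Omega_star_nonempty:
  assumes "0 < c0" "c0 \<le> B" "continuous_on {c0..} \<mu>" "continuous_on {1..} Q"
  shows "Omega_star \<mu> Q c0 B \<noteq> {}"
proof -
  have "continuous_on {c0..B} (Zfun \<mu> Q B)"
    unfolding Zfun_def
  proof (rule continuous_on_add)
    show "continuous_on {c0..B} \<mu>"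
      using assms(3) by (rule continuous_on_subset) auto
    show "continuous_on {c0..B} (\<lambda>w. Q (B / w))"
      using assms by (intro continuous_on_comp_quotient) auto
  qed
  then show ?thesis
    unfolding Omega_star_eq_maximisers using \<open>c0 \<le> B\<close> by (intro maximisers_nonempty) auto
qed

lemma Omega_star_exchange:
  assumes "0 < c0"
    and Q_deriv: "\<And>x. x \<ge> 1 \<Longrightarrow> (Q has_real_derivative Q' x) (at x within {1..})"
    and NQ'_nonincr: "\<And>x y. 1 \<le> x \<Longrightarrow> x \<le> y \<Longrightarrow> y * Q' y \<le> x * Q' x"
    and "B\<^sub>1 \<le> B\<^sub>2" "w\<^sub>1 \<in> Omega_star \<mu> Q c0 B\<^sub>1" "w\<^sub>2 \<in> Omega_star \<mu> Q c0 B\<^sub>2" "w\<^sub>2 < w\<^sub>1"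
  shows "w\<^sub>2 \<in> Omega_star \<mu> Q c0 B\<^sub>1 \<and> w\<^sub>1 \<in> Omega_star \<mu> Q c0 B\<^sub>2"
  unfolding Omega_star_eq_maximisers
proof (rule maximisers_exchange)
  have "c0 \<le> w\<^sub>2" "w\<^sub>1 \<le> B\<^sub>1"
    using assms(5,6) unfolding Omega_star_def by auto
  then show "w\<^sub>2 \<in> {c0..B\<^sub>1}" "w\<^sub>1 \<in> {c0..B\<^sub>2}"
    using assms(4,7) by auto
  have "Q (B\<^sub>2 / w\<^sub>2) - Q (B\<^sub>1 / w\<^sub>2) \<le> Q (B\<^sub>2 / w\<^sub>1) - Q (B\<^sub>1 / w\<^sub>1)"
    using \<open>0 < c0\<close> \<open>c0 \<le> w\<^sub>2\<close> \<open>w\<^sub>1 \<le> B\<^sub>1\<close> assms(4,7)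
    by (intro increasing_differences_comp_quotient[OF Q_deriv NQ'_nonincr]) auto
  then show "Zfun \<mu> Q B\<^sub>2 w\<^sub>2 - Zfun \<mu> Q B\<^sub>1 w\<^sub>2 \<le> Zfun \<mu> Q B\<^sub>2 w\<^sub>1 - Zfun \<mu> Q B\<^sub>1 w\<^sub>1"
    by (simp add: Zfun_def)
qed (use assms(5,6) in \<open>simp_all add: Omega_star_eq_maximisers\<close>)

lemma
  assumes "0 < c0" "continuous_on {c0..} \<mu>"
    and Q_deriv: "\<And>x. x \<ge> 1 \<Longrightarrow> (Q has_real_derivative Q' x) (at x within {1..})"
    and NQ'_nonincr: "\<And>x y. 1 \<le> x \<Longrightarrow> x \<le> y \<Longrightarrow> y * Q' y \<le> x * Q' x"
  shows mono_on_omega_low: "mono_on {c0..} (omega_low \<mu> Q c0)"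
    and mono_on_omega_up: "mono_on {c0..} (omega_up \<mu> Q c0)"
proof -
  have Q_cont: "continuous_on {1..} Q"
    using Q_deriv by (intro DERIV_continuous_on) auto
  note nonempty = Omega_star_nonempty[OF \<open>0 < c0\<close> _ \<open>continuous_on {c0..} \<mu>\<close> Q_cont]
  note exchange = Omega_star_exchange[OF \<open>0 < c0\<close> Q_deriv NQ'_nonincr]
  have bounded: "bdd_below (Omega_star \<mu> Q c0 B)" "bdd_above (Omega_star \<mu> Q c0 B)" for B
    unfolding Omega_star_def by (auto intro: bdd_belowI bdd_aboveI)
  show "mono_on {c0..} (omega_low \<mu> Q c0)"
    unfolding omega_low_def
    by (intro mono_onI cInf_mono_of_exchange nonempty bounded)
      (auto intro: exchange[THEN conjunct1])
  show "mono_on {c0..} (omega_up \<mu> Q c0)"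
    unfolding omega_up_def
    by (intro mono_onI cSup_mono_of_exchange nonempty bounded)
      (auto intro: exchange[THEN conjunct2])
qed

lemma Omega_star_singleton:
  assumes "0 < c0" "c0 \<le> B" "continuous_on {c0..} \<mu>" "concave_on {c0..} \<mu>"
    and Q_deriv: "\<And>x. x \<ge> 1 \<Longrightarrow> (Q has_real_derivative Q' x) (at x within {1..})"
    and N2Q'_decr: "\<And>x y. 1 \<le> x \<Longrightarrow> x < y \<Longrightarrow> y\<^sup>2 * Q' y < x\<^sup>2 * Q' x"
  shows "Omega_star \<mu> Q c0 B = {omega_low \<mu> Q c0 B}"
proof -
  have strict_midpoint_concave:
    "(Zfun \<mu> Q B x + Zfun \<mu> Q B y) / 2 < Zfun \<mu> Q B ((x + y) / 2)"
    if "x \<in> {c0..B}" "y \<in> {c0..B}" "x < y" for x y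
  proof -
    have "(\<mu> x + \<mu> y) / 2 \<le> \<mu> ((x + y) / 2)"
      using concave_onD[OF \<open>concave_on {c0..} \<mu>\<close>, of "1/2" x y] that
      by (simp add: field_simps)
    moreover have "(Q (B / x) + Q (B / y)) / 2 < Q (B / ((x + y) / 2))"
      using that \<open>0 < c0\<close> by (intro mean_lt_midpoint_comp_quotient[OF Q_deriv N2Q'_decr]) auto
    ultimately show ?thesis
      by (simp add: Zfun_def)
  qed
  have Q_cont: "continuous_on {1..} Q"
    using Q_deriv by (intro DERIV_continuous_on) auto
  obtain w where w: "w \<in> Omega_star \<mu> Q c0 B"
    using Omega_star_nonempty[OF \<open>0 < c0\<close> \<open>c0 \<le> B\<close> \<open>continuous_on {c0..} \<mu>\<close> Q_cont] by blast
  have "Omega_star \<mu> Q c0 B = {w}"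
    using w maximisers_unique[OF convex_real_interval(5) strict_midpoint_concave]
    unfolding Omega_star_eq_maximisers by blast
  then show ?thesis
    by (simp add: omega_low_def)
qed

theorem theorem1:
  fixes c0 :: real and \<mu> \<mu>' \<mu>'' Q Q' Q'' :: "real \<Rightarrow> real"
  assumes c0_pos: "c0 > 0"
    and mu_d1: "\<And>x. x \<ge> c0 \<Longrightarrow> (\<mu> has_real_derivative \<mu>' x) (at x within {c0..})"
    and mu_d2: "\<And>x. x \<ge> c0 \<Longrightarrow> (\<mu>' has_real_derivative \<mu>'' x) (at x within {c0..})"
    and mu_mono: "mono_on {c0..} \<mu>"
    and mu_concave: "concave_on {c0..} \<mu>"
    and Q_d1: "\<And>x. x \<ge> 1 \<Longrightarrow> (Q has_real_derivative Q' x) (at x within {1..})"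
    and Q_d2: "\<And>x. x \<ge> 1 \<Longrightarrow> (Q' has_real_derivative Q'' x) (at x within {1..})"
    and Q_mono: "mono_on {1..} Q"
    and Q_concave: "concave_on {1..} Q"
    and Q_nonneg: "\<And>x. x \<ge> 1 \<Longrightarrow> Q x \<ge> 0"
    and NQ'_nonincr: "\<And>x y. 1 \<le> x \<Longrightarrow> x \<le> y \<Longrightarrow> y * Q' y \<le> x * Q' x"
  shows "mono_on {c0..} (omega_low \<mu> Q c0) \<and> mono_on {c0..} (omega_up \<mu> Q c0)
       \<and> ((\<forall>x y. 1 \<le> x \<longrightarrow> x < y \<longrightarrow> y\<^sup>2 * Q' y < x\<^sup>2 * Q' x) \<longrightarrow>
            (\<forall>B \<ge> c0. \<exists>\<omega>. Omega_star \<mu> Q c0 B = {\<omega>})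
          \<and> mono_on {c0..} (\<lambda>B. THE \<omega>. Omega_star \<mu> Q c0 B = {\<omega>}))"
proof -
  have mu_cont: "continuous_on {c0..} \<mu>"
    using mu_d1 by (intro DERIV_continuous_on) auto
  have singleton: "Omega_star \<mu> Q c0 B = {omega_low \<mu> Q c0 B}"
    if "B \<ge> c0" "\<forall>x y. 1 \<le> x \<longrightarrow> x < y \<longrightarrow> y\<^sup>2 * Q' y < x\<^sup>2 * Q' x" for B
    using that by (intro Omega_star_singleton[OF c0_pos _ mu_cont mu_concave Q_d1]) auto
  have low: "mono_on {c0..} (omega_low \<mu> Q c0)"
    by (rule mono_on_omega_low[OF c0_pos mu_cont Q_d1 NQ'_nonincr])
  moreover have "mono_on {c0..} (omega_up \<mu> Q c0)"
    by (rule mono_on_omega_up[OF c0_pos mu_cont Q_d1 NQ'_nonincr])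
  moreover have "mono_on {c0..} (\<lambda>B. THE \<omega>. Omega_star \<mu> Q c0 B = {\<omega>})"
    if "\<forall>x y. 1 \<le> x \<longrightarrow> x < y \<longrightarrow> y\<^sup>2 * Q' y < x\<^sup>2 * Q' x"
    using mono_onD[OF low] singleton[OF _ that] by (intro mono_onI) simp
  ultimately show ?thesis
    using singleton by blast
qed

end
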